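(* For $n\ge 2$, $t\ge0$ and $2\le k\le n$: \[ \int_0^t q_{n2}(w)\,dw=q_{n1}(t),\qquad \int_0^t q_{n2}(k;w)\,dw=q_{n1}(k;t),\qquad \int_0^t (t-w)\,q_{n2}(w)\,dw=q_{n1}(1;t). \]
   Context: Kingman coalescent: for $n\ge2$, let $T_n,\dots,T_2$ be independent, $T_k$ exponential with rate $\binom{k}{2}$, and put $T_1=\infty$. For $t\ge0$ let $A_n(t)$ be the number of lineages at time $t$ back, i.e. $A_n(t)=l$ iff $T_n+\dots+T_{l+1}\le t<T_n+\dots+T_l$. Write $q_{nl}(t)=\mathbb P(A_n(t)=l)$. For $1\le k\le n$ let $T^{(t)}_k$ be the Lebesgue measure of $\{s\in[0,t]:A_n(s)=k\}$, and for $1\le l\le k\le n$ define $q_{nl}(k;t)=\mathbb E\big[T^{(t)}_k\,\mathbb I\{A_n(t)=l\}\big]$. *)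

theory Defs
  imports "HOL-Probability.Probability"
begin

text \<open>The sample space is the product over
  k in {2..n} of exponential distributions with rate (k choose 2); the coordinate
  omega k is the holding time T_k.  T_1 = infinity is encoded by the convention that
  level 1 is never left.\<close>

definition kingman_space :: "nat \<Rightarrow> (nat \<Rightarrow> real) measure" where
  "kingman_space n = (\<Pi>\<^sub>M k\<in>{2..n}.
      density lborel (\<lambda>x. ennreal (exponential_density (real (k choose 2)) x)))"

definition lineages_cond :: "nat \<Rightarrow> (nat \<Rightarrow> real) \<Rightarrow> real \<Rightarrow> nat \<Rightarrow> bool" where
  "lineages_cond n \<omega> t l \<longleftrightarrow>
     (\<Sum>j\<in>{l+1..n}. \<omega> j) \<le> t \<and> (l = 1 \<or> t < (\<Sum>j\<in>{l..n}. \<omega> j))"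

definition lineages :: "nat \<Rightarrow> (nat \<Rightarrow> real) \<Rightarrow> real \<Rightarrow> nat" where
  "lineages n \<omega> t = (THE l. l \<in> {1..n} \<and> lineages_cond n \<omega> t l)"

definition q :: "nat \<Rightarrow> nat \<Rightarrow> real \<Rightarrow> real" where
  "q n l t = measure (kingman_space n) {\<omega> \<in> space (kingman_space n). lineages n \<omega> t = l}"

definition occ_time :: "nat \<Rightarrow> nat \<Rightarrow> real \<Rightarrow> (nat \<Rightarrow> real) \<Rightarrow> real" where
  "occ_time n k t \<omega> = measure lborel {s \<in> {0..t}. lineages n \<omega> s = k}"

definition q_occ :: "nat \<Rightarrow> nat \<Rightarrow> nat \<Rightarrow> real \<Rightarrow> real" where
  "q_occ n l k t = (\<integral>\<omega>. occ_time n k t \<omega> * indicator {\<omega>. lineages n \<omega> t = l} \<omega> \<partial>kingman_space n)"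

end

theory Submission
  imports Defs
begin

(* Let R = T_n + ... + T_3 be the time at which two lineages remain and X = T_2, so that
   A_n(w) = 2 iff R \<le> w < R + X, and A_n(t) = 1 iff R + X \<le> t.  X is Exp(1) and independent of
   T_3, ..., T_n, so for a weight f(\<omega>, x) not depending on T_2, conditioning on everything but X
   gives  \<integral>_0^t E[1{R \<le> w < R + X} f(\<omega>, w - R)] dw = E[1{R + X \<le> t} f(\<omega>, X)]:  after Fubini
   both sides equal the integral of f(\<omega>, u) exp(-u) over 0 \<le> u \<le> t - R, because the tail of
   Exp(1) coincides with its density.  The three identities are the cases f = 1,
   f = (x if k = 2, else T_k) and f = t - R - x. *)

(* The rate uses max 2 k so that every factor is a probability measure; only the factors
   with k \<in> {2..n} enter kingman_space. *)

definition holding_measure :: "nat \<Rightarrow> real measure" where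
  "holding_measure k = density lborel (exponential_density (real (max 2 k choose 2)))"

lemma kingman_space_eq_PiM: "kingman_space n = PiM {2..n} holding_measure"
  unfolding kingman_space_def holding_measure_def by (intro PiM_cong) (auto simp: max_def)

lemma holding_measure_two: "holding_measure 2 = density lborel (exponential_density 1)"
  by (simp add: holding_measure_def)

lemma prob_space_holding_measure: "prob_space (holding_measure k)"
  unfolding holding_measure_def
  by (rule prob_space_exponential_density) simp

lemma product_prob_space_holding_measure: "product_prob_space holding_measure"
  by (simp add: product_prob_space_def product_prob_space_axioms_def product_sigma_finite_def
      prob_space_holding_measure prob_space_imp_sigma_finite)

lemma prob_space_kingman_space: "prob_space (kingman_space n)"
  unfolding kingman_space_eq_PiM by (rule prob_space_PiM) (simp add: prob_space_holding_measure)

lemma sets_holding_measure [simp, measurable_cong]: "sets (holding_measure k) = sets borel"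
  by (simp add: holding_measure_def)

lemma space_holding_measure [simp]: "space (holding_measure k) = UNIV"
  by (simp add: holding_measure_def)

lemma measurable_component_kingman [measurable]:
  "(\<lambda>\<omega>. \<omega> j) \<in> borel_measurable (kingman_space n)"
proof (cases "j \<in> {2..n}")
  case True
  then show ?thesis
    unfolding kingman_space_eq_PiM by measurable
next
  case False
  then have "(\<lambda>\<omega>. \<omega> j) \<in> borel_measurable (kingman_space n) \<longleftrightarrow>
      (\<lambda>\<omega>. undefined :: real) \<in> borel_measurable (kingman_space n)"
    by (intro measurable_cong) (auto simp: kingman_space_eq_PiM space_PiM PiE_def extensional_def)
  then show ?thesis
    by simp
qed

definition exit_time :: "nat \<Rightarrow> nat \<Rightarrow> (nat \<Rightarrow> real) \<Rightarrow> real" where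
  "exit_time n l \<omega> = (\<Sum>j\<in>{l..n}. \<omega> j)"

definition nonneg_times :: "nat \<Rightarrow> (nat \<Rightarrow> real) \<Rightarrow> bool" where
  "nonneg_times n \<omega> \<longleftrightarrow> (\<forall>j\<in>{2..n}. 0 \<le> \<omega> j)"

lemma borel_measurable_exit_time [measurable]:
  "exit_time n l \<in> borel_measurable (kingman_space n)"
  unfolding exit_time_def by measurable

lemma measurable_nonneg_times [measurable]: "Measurable.pred (kingman_space n) (nonneg_times n)"
  unfolding nonneg_times_def by measurable

lemma AE_nonneg_times: "AE \<omega> in kingman_space n. nonneg_times n \<omega>"
  unfolding nonneg_times_def
proof (rule AE_finite_allI)
  fix j assume j: "j \<in> {2..n}"
  have "AE x in holding_measure j. 0 \<le> x"
    unfolding holding_measure_def by (subst AE_density) (auto simp: exponential_density_def)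
  then show "AE \<omega> in kingman_space n. 0 \<le> \<omega> j"
    unfolding kingman_space_eq_PiM
    using product_prob_space.AE_component[OF product_prob_space_holding_measure j] by blast
qed simp

lemma exit_time_Suc_n [simp]: "exit_time n (Suc n) \<omega> = 0"
  by (simp add: exit_time_def)

lemma exit_time_unfold: "l \<le> n \<Longrightarrow> exit_time n l \<omega> = \<omega> l + exit_time n (Suc l) \<omega>"
  unfolding exit_time_def by (simp add: sum.atLeast_Suc_atMost)

lemma exit_time_two: "2 \<le> n \<Longrightarrow> exit_time n 2 \<omega> = \<omega> 2 + exit_time n 3 \<omega>"
  using exit_time_unfold[of 2 n \<omega>] by (simp add: numeral_3_eq_3)

lemma exit_time_fun_upd: "j < l \<Longrightarrow> exit_time n l (\<omega> (j := y)) = exit_time n l \<omega>"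
  unfolding exit_time_def by (intro sum.cong) auto

lemma exit_time_antimono:
  "nonneg_times n \<omega> \<Longrightarrow> 2 \<le> l \<Longrightarrow> l \<le> l' \<Longrightarrow> exit_time n l' \<omega> \<le> exit_time n l \<omega>"
  unfolding exit_time_def nonneg_times_def by (intro sum_mono2) auto

lemma exit_time_nonneg: "nonneg_times n \<omega> \<Longrightarrow> 2 \<le> l \<Longrightarrow> 0 \<le> exit_time n l \<omega>"
  unfolding exit_time_def nonneg_times_def by (intro sum_nonneg) auto

lemma holding_time_le_exit_time:
  "nonneg_times n \<omega> \<Longrightarrow> 2 \<le> l \<Longrightarrow> l \<le> k \<Longrightarrow> k \<le> n \<Longrightarrow> \<omega> k \<le> exit_time n l \<omega>"
  unfolding exit_time_def nonneg_times_def by (intro member_le_sum) auto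

lemma lineages_cond_iff:
  "lineages_cond n \<omega> s l \<longleftrightarrow> exit_time n (l + 1) \<omega> \<le> s \<and> (l = 1 \<or> s < exit_time n l \<omega>)"
  by (simp add: lineages_cond_def exit_time_def)

lemma ex1_lineages_cond:
  assumes \<omega>: "nonneg_times n \<omega>" and "0 \<le> s" "1 \<le> n"
  shows "\<exists>!l. l \<in> {1..n} \<and> lineages_cond n \<omega> s l"
proof
  define L where "L = {l \<in> {1..n}. exit_time n (l + 1) \<omega> \<le> s}"
  define l0 where "l0 = Min L"
  have "finite L" "n \<in> L"
    using assms by (auto simp: L_def)
  then have "l0 \<in> L" and l0_min: "\<And>l. l \<in> L \<Longrightarrow> l0 \<le> l"
    unfolding l0_def by (auto intro: Min_in)
  moreover have "l0 = 1 \<or> s < exit_time n l0 \<omega>"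
  proof (rule ccontr)
    assume "\<not> (l0 = 1 \<or> s < exit_time n l0 \<omega>)"
    then have "l0 - 1 \<in> L"
      using \<open>l0 \<in> L\<close> by (auto simp: L_def)
    then show False
      using l0_min \<open>\<not> (l0 = 1 \<or> _)\<close> \<open>l0 \<in> L\<close> by (fastforce simp: L_def)
  qed
  ultimately show l0: "l0 \<in> {1..n} \<and> lineages_cond n \<omega> s l0"
    by (simp add: L_def lineages_cond_iff)
  have not_less: "\<not> a < b"
    if "a \<in> {1..n}" "lineages_cond n \<omega> s a" "b \<in> {1..n}" "lineages_cond n \<omega> s b" for a b
  proof
    assume "a < b"
    then have "exit_time n b \<omega> \<le> exit_time n (a + 1) \<omega>"
      using \<omega> that by (intro exit_time_antimono) auto
    then show False
      using \<open>a < b\<close> that by (auto simp: lineages_cond_iff)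
  qed
  show "l = l0" if "l \<in> {1..n} \<and> lineages_cond n \<omega> s l" for l
    using not_less[of l l0] not_less[of l0 l] that l0 by simp
qed

lemma lineages_eq_iff:
  assumes "nonneg_times n \<omega>" "0 \<le> s" "l \<in> {1..n}"
  shows "lineages n \<omega> s = l \<longleftrightarrow> exit_time n (l + 1) \<omega> \<le> s \<and> (l = 1 \<or> s < exit_time n l \<omega>)"
proof -
  have ex1: "\<exists>!l. l \<in> {1..n} \<and> lineages_cond n \<omega> s l"
    using assms by (intro ex1_lineages_cond) auto
  then have "lineages n \<omega> s \<in> {1..n} \<and> lineages_cond n \<omega> s (lineages n \<omega> s)"
    unfolding lineages_def by (rule theI')
  then show ?thesis
    using ex1 assms(3) by (auto simp: lineages_cond_iff)
qed

lemma lineages_eq_1_iff: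
  "nonneg_times n \<omega> \<Longrightarrow> 0 \<le> s \<Longrightarrow> 2 \<le> n \<Longrightarrow>
    lineages n \<omega> s = 1 \<longleftrightarrow> exit_time n 3 \<omega> + \<omega> 2 \<le> s"
  using lineages_eq_iff[of n \<omega> s 1, unfolded one_add_one] by (simp add: exit_time_two add.commute)

lemma lineages_eq_2_iff:
  "nonneg_times n \<omega> \<Longrightarrow> 0 \<le> s \<Longrightarrow> 2 \<le> n \<Longrightarrow>
    lineages n \<omega> s = 2 \<longleftrightarrow> exit_time n 3 \<omega> \<le> s \<and> s < exit_time n 3 \<omega> + \<omega> 2"
  using lineages_eq_iff[of n \<omega> s 2, unfolded numeral_plus_one semiring_norm]
  by (simp add: exit_time_two add.commute)

lemma occ_time_completed_level:
  assumes \<omega>: "nonneg_times n \<omega>" and k: "2 \<le> k" "k \<le> n" and "exit_time n k \<omega> \<le> w"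
  shows "occ_time n k w \<omega> = \<omega> k"
proof -
  have "lineages n \<omega> s = k \<longleftrightarrow> exit_time n (k + 1) \<omega> \<le> s \<and> s < exit_time n k \<omega>" if "0 \<le> s" for s
    using lineages_eq_iff[OF \<omega> that, of k] k by auto
  moreover have "0 \<le> exit_time n (k + 1) \<omega>"
    using \<omega> k by (intro exit_time_nonneg) auto
  ultimately have "{s \<in> {0..w}. lineages n \<omega> s = k} = {exit_time n (k + 1) \<omega> ..< exit_time n k \<omega>}"
    using assms(4) by fastforce
  then show ?thesis
    using exit_time_unfold[OF k(2), of \<omega>] \<omega> k by (simp add: occ_time_def nonneg_times_def)
qed

lemma occ_time_current_level:
  assumes \<omega>: "nonneg_times n \<omega>" and "0 \<le> w" "l \<in> {1..n}" "lineages n \<omega> w = l"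
  shows "occ_time n l w \<omega> = w - exit_time n (l + 1) \<omega>"
proof -
  have level: "lineages n \<omega> s = l \<longleftrightarrow> exit_time n (l + 1) \<omega> \<le> s \<and> (l = 1 \<or> s < exit_time n l \<omega>)"
    if "0 \<le> s" for s
    using lineages_eq_iff[OF \<omega> that assms(3)] .
  have "0 \<le> exit_time n (l + 1) \<omega>"
    using \<omega> assms(3) by (intro exit_time_nonneg) auto
  moreover have "exit_time n (l + 1) \<omega> \<le> w" "l = 1 \<or> w < exit_time n l \<omega>"
    using level[OF \<open>0 \<le> w\<close>] assms(4) by auto
  ultimately have "{s \<in> {0..w}. lineages n \<omega> s = l} = {exit_time n (l + 1) \<omega> .. w}"
    using level by fastforce
  then show ?thesis
    using \<open>exit_time n (l + 1) \<omega> \<le> w\<close> by (simp add: occ_time_def)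
qed

lemma measurable_lineages:
  assumes [measurable]: "\<And>j. (\<lambda>x. W x j) \<in> borel_measurable N" "T \<in> borel_measurable N"
  shows "(\<lambda>x. lineages n (W x) (T x)) \<in> measurable N (count_space UNIV)"
proof -
  define B where "B x = {l \<in> {1..n}. lineages_cond n (W x) (T x) l}" for x
  have lineages_eq: "lineages n (W x) (T x) = The (\<lambda>l. l \<in> B x)" for x
    unfolding lineages_def B_def by simp
  have B_eq: "{x \<in> space N. B x = C} \<in> sets N" for C
  proof -
    have "{x \<in> space N. B x = C} =
        {x \<in> space N. \<forall>l\<in>{1..n}. lineages_cond n (W x) (T x) l \<longleftrightarrow> l \<in> C} \<inter> {x \<in> space N. C \<subseteq> {1..n}}"
      unfolding B_def by auto
    also have "\<dots> \<in> sets N"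
      unfolding lineages_cond_def by measurable
    finally show ?thesis .
  qed
  show ?thesis
  proof (subst measurable_count_space_eq2_countable, safe)
    fix a :: nat
    have "(\<lambda>x. lineages n (W x) (T x)) -` {a} \<inter> space N =
        (\<Union>C\<in>{C. C \<subseteq> {1..n} \<and> The (\<lambda>l. l \<in> C) = a}. {x \<in> space N. B x = C})"
      unfolding lineages_eq B_def by auto
    also have "\<dots> \<in> sets N"
      by (intro sets.finite_UN B_eq) (auto intro: finite_subset[of _ "Pow {1..n}"])
    finally show "(\<lambda>x. lineages n (W x) (T x)) -` {a} \<inter> space N \<in> sets N" .
  qed auto
qed

lemma measurable_lineages_kingman [measurable]:
  "(\<lambda>\<omega>. lineages n \<omega> t) \<in> measurable (kingman_space n) (count_space UNIV)"
  using measurable_lineages[of "\<lambda>\<omega>. \<omega>" "kingman_space n" "\<lambda>_. t"] by simp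

lemma borel_measurable_occ_time [measurable]: "occ_time n k t \<in> borel_measurable (kingman_space n)"
proof -
  let ?K = "kingman_space n"
  define Q where "Q = {p \<in> space (?K \<Otimes>\<^sub>M lborel). snd p \<in> {0..t} \<and> lineages n (fst p) (snd p) = k}"
  have "(\<lambda>p. lineages n (fst p) (snd p)) \<in> measurable (?K \<Otimes>\<^sub>M lborel) (count_space UNIV)"
    by (rule measurable_lineages) measurable
  then have "Q \<in> sets (?K \<Otimes>\<^sub>M lborel)"
    unfolding Q_def by measurable
  then have "(\<lambda>\<omega>. measure lborel (Pair \<omega> -` Q)) \<in> borel_measurable ?K"
    unfolding measure_def by (intro borel_measurable_enn2real lborel.measurable_emeasure_Pair)
  moreover have "Pair \<omega> -` Q = {s \<in> {0..t}. lineages n \<omega> s = k}" if "\<omega> \<in> space ?K" for \<omega>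
    using that by (auto simp: Q_def space_pair_measure)
  ultimately show ?thesis
    unfolding occ_time_def by (subst measurable_cong) auto
qed

lemma emeasure_exponential_density_greaterThan:
  assumes "0 \<le> a"
  shows "emeasure (density lborel (exponential_density 1)) {a<..} = exp (- a)"
proof -
  let ?E = "density lborel (exponential_density 1)"
  have "emeasure ?E {a<..} = emeasure ?E (space ?E - {..a})"
    by (rule arg_cong[where f = "emeasure ?E"]) auto
  also have "\<dots> = emeasure ?E (space ?E) - emeasure ?E {..a}"
    by (rule emeasure_compl) (simp_all add: emeasure_erlang_density)
  also have "\<dots> = 1 - ennreal (erlang_CDF 0 1 a)"
    using prob_space.emeasure_space_1[OF prob_space_exponential_density]
    by (simp add: emeasure_erlang_density)
  also have "\<dots> = exp (- a)"
    using assms by (subst ennreal_1[symmetric], subst ennreal_minus) (auto simp: erlang_CDF_0)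
  finally show ?thesis .
qed

lemma nn_integral_exponential_window:
  fixes g :: "real \<Rightarrow> ennreal"
  assumes [measurable]: "g \<in> borel_measurable borel" and s: "0 \<le> s"
  shows "(\<integral>\<^sup>+x. (\<integral>\<^sup>+w. indicator {0..t} w * (if 0 \<le> x \<and> s \<le> w \<and> w < s + x then g (w - s) else 0)
            \<partial>lborel) \<partial>density lborel (exponential_density 1))
       = (\<integral>\<^sup>+x. (if 0 \<le> x \<and> s + x \<le> t then g x else 0) \<partial>density lborel (exponential_density 1))"
proof -
  let ?E = "density lborel (exponential_density 1)"
  let ?d = "\<lambda>x. ennreal (exponential_density 1 x)"
  let ?H = "\<lambda>x w. indicator {0..t} w * (if 0 \<le> x \<and> s \<le> w \<and> w < s + x then g (w - s) else 0)"
  let ?h = "\<lambda>u. if 0 \<le> u \<and> s + u \<le> t then g u * ennreal (exp (- u)) else 0"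
  have inner: "(\<integral>\<^sup>+x. ?d x * ?H x w \<partial>lborel) = ?h (w - s)" for w
  proof (cases "s \<le> w \<and> w \<le> t")
    case True
    have "(\<integral>\<^sup>+x. ?d x * ?H x w \<partial>lborel) = (\<integral>\<^sup>+x. g (w - s) * (?d x * indicator {w - s<..} x) \<partial>lborel)"
      using True s by (intro nn_integral_cong) (auto simp: indicator_def mult.commute)
    also have "\<dots> = g (w - s) * emeasure ?E {w - s<..}"
      by (simp add: nn_integral_cmult emeasure_density)
    finally show ?thesis
      using True by (simp add: emeasure_exponential_density_greaterThan)
  qed (auto simp: indicator_def)
  have "(\<integral>\<^sup>+x. (\<integral>\<^sup>+w. ?H x w \<partial>lborel) \<partial>?E) = (\<integral>\<^sup>+x. (\<integral>\<^sup>+w. ?d x * ?H x w \<partial>lborel) \<partial>lborel)"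
    by (simp add: nn_integral_density nn_integral_cmult)
  also have "\<dots> = (\<integral>\<^sup>+w. (\<integral>\<^sup>+x. ?d x * ?H x w \<partial>lborel) \<partial>lborel)"
    by (rule lborel_pair.Fubini'[symmetric]) measurable
  also have "\<dots> = (\<integral>\<^sup>+w. ?h (w - s) \<partial>lborel)"
    by (simp only: inner)
  also have "\<dots> = (\<integral>\<^sup>+u. ?h (s + 1 * u - s) \<partial>lborel)"
    by (subst nn_integral_real_affine[where c = 1 and t = s]) simp_all
  also have "\<dots> = (\<integral>\<^sup>+u. ?h u \<partial>lborel)"
    by (intro nn_integral_cong) simp
  also have "\<dots> = (\<integral>\<^sup>+x. ?d x * (if 0 \<le> x \<and> s + x \<le> t then g x else 0) \<partial>lborel)"
    by (intro nn_integral_cong) (auto simp: exponential_density_def mult.commute)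
  also have "\<dots> = (\<integral>\<^sup>+x. (if 0 \<le> x \<and> s + x \<le> t then g x else 0) \<partial>?E)"
    by (subst nn_integral_density) auto
  finally show ?thesis .
qed

lemma nn_integral_kingman_space_split_two:
  assumes "2 \<le> n" and "H \<in> borel_measurable (kingman_space n)"
  shows "(\<integral>\<^sup>+\<omega>. H \<omega> \<partial>kingman_space n)
    = (\<integral>\<^sup>+x. (\<integral>\<^sup>+y. H (x (2 := y)) \<partial>density lborel (exponential_density 1)) \<partial>PiM {3..n} holding_measure)"
proof -
  have "{2..n} = insert 2 {3..n}"
    using assms(1) by auto
  then have "kingman_space n = PiM (insert 2 {3..n}) holding_measure"
    by (simp add: kingman_space_eq_PiM)
  with assms(2) show ?thesis
    unfolding holding_measure_two[symmetric]
    by (simp add: product_sigma_finite.product_nn_integral_insert product_prob_space_holding_measure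
        product_prob_space.axioms(1))
qed

lemma nn_integral_level_two:
  fixes g :: "(nat \<Rightarrow> real) \<Rightarrow> real \<Rightarrow> ennreal"
  assumes n: "2 \<le> n"
    and g_meas [measurable]: "(\<lambda>(\<omega>, x). g \<omega> x) \<in> borel_measurable (kingman_space n \<Otimes>\<^sub>M borel)"
    and g_indep: "\<And>\<omega> y. g (\<omega> (2 := y)) = g \<omega>"
  shows "(\<integral>\<^sup>+w. (\<integral>\<^sup>+\<omega>. indicator {0..t} w *
            (if nonneg_times n \<omega> \<and> exit_time n 3 \<omega> \<le> w \<and> w < exit_time n 3 \<omega> + \<omega> 2
             then g \<omega> (w - exit_time n 3 \<omega>) else 0) \<partial>kingman_space n) \<partial>lborel)
       = (\<integral>\<^sup>+\<omega>. (if nonneg_times n \<omega> \<and> exit_time n 3 \<omega> + \<omega> 2 \<le> t then g \<omega> (\<omega> 2) else 0)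
            \<partial>kingman_space n)"
proof -
  let ?K = "kingman_space n" and ?K3 = "PiM {3..n} holding_measure" and ?R = "exit_time n 3"
    and ?E = "density lborel (exponential_density 1)"
  define F where "F w \<omega> = indicator {0..t} w *
    (if nonneg_times n \<omega> \<and> ?R \<omega> \<le> w \<and> w < ?R \<omega> + \<omega> 2 then g \<omega> (w - ?R \<omega>) else 0)" for w \<omega>
  define G where "G \<omega> = (if nonneg_times n \<omega> \<and> ?R \<omega> + \<omega> 2 \<le> t then g \<omega> (\<omega> 2) else 0)" for \<omega>
  have F_meas [measurable]: "(\<lambda>(\<omega>, w). F w \<omega>) \<in> borel_measurable (?K \<Otimes>\<^sub>M lborel)"
    unfolding F_def by measurable
  have G_meas [measurable]: "G \<in> borel_measurable ?K"
    unfolding G_def by measurable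
  have fibre: "(\<integral>\<^sup>+y. (\<integral>\<^sup>+w. F w (x (2 := y)) \<partial>lborel) \<partial>?E) = (\<integral>\<^sup>+y. G (x (2 := y)) \<partial>?E)"
    if x: "x \<in> space ?K3" for x
  proof (cases "\<forall>j\<in>{3..n}. 0 \<le> x j")
    case True
    then have "0 \<le> ?R x"
      unfolding exit_time_def by (intro sum_nonneg) auto
    have nonneg: "nonneg_times n (x (2 := y)) \<longleftrightarrow> 0 \<le> y" for y
      using True n by (auto simp: nonneg_times_def)
    have "x (2 := 0) \<in> space ?K"
      using x n by (auto simp: kingman_space_eq_PiM space_PiM PiE_def extensional_def)
    from measurable_Pair2[OF g_meas this] have "g x \<in> borel_measurable borel"
      by (simp add: g_indep)
    from nn_integral_exponential_window[OF this \<open>0 \<le> ?R x\<close>, of t] show ?thesis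
      by (simp add: F_def G_def exit_time_fun_upd g_indep nonneg cong: if_cong)
  next
    case False
    then obtain j where "j \<in> {3..n}" "x j < 0"
      by (auto simp: not_le)
    then have "\<not> nonneg_times n (x (2 := y))" for y
      unfolding nonneg_times_def by (auto intro!: bexI[of _ j])
    then show ?thesis
      by (simp add: F_def G_def)
  qed
  have "(\<integral>\<^sup>+w. (\<integral>\<^sup>+\<omega>. F w \<omega> \<partial>?K) \<partial>lborel) = (\<integral>\<^sup>+\<omega>. (\<integral>\<^sup>+w. F w \<omega> \<partial>lborel) \<partial>?K)"
    by (intro pair_sigma_finite.Fubini' pair_sigma_finite.intro F_meas lborel.sigma_finite_measure_axioms
        prob_space_imp_sigma_finite prob_space_kingman_space)
  also have "\<dots> = (\<integral>\<^sup>+x. (\<integral>\<^sup>+y. (\<integral>\<^sup>+w. F w (x (2 := y)) \<partial>lborel) \<partial>?E) \<partial>?K3)"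
    using n by (rule nn_integral_kingman_space_split_two) measurable
  also have "\<dots> = (\<integral>\<^sup>+x. (\<integral>\<^sup>+y. G (x (2 := y)) \<partial>?E) \<partial>?K3)"
    by (intro nn_integral_cong fibre)
  also have "\<dots> = (\<integral>\<^sup>+\<omega>. G \<omega> \<partial>?K)"
    using n by (rule nn_integral_kingman_space_split_two[symmetric]) measurable
  finally show ?thesis
    unfolding F_def G_def .
qed

lemma set_integral_enn2real_eq_nn_integral:
  fixes N :: "'a \<Rightarrow> ennreal"
  assumes [measurable]: "N \<in> borel_measurable M" "A \<in> sets M" and finite: "\<And>x. x \<in> A \<Longrightarrow> N x < \<infinity>"
  shows "(LINT x:A|M. enn2real (N x)) = enn2real (\<integral>\<^sup>+x. indicator A x * N x \<partial>M)"
proof -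
  have "(LINT x:A|M. enn2real (N x)) = enn2real (\<integral>\<^sup>+x. ennreal (indicator A x * enn2real (N x)) \<partial>M)"
    unfolding set_lebesgue_integral_def real_scaleR_def by (intro integral_eq_nn_integral) auto
  also have "(\<integral>\<^sup>+x. ennreal (indicator A x * enn2real (N x)) \<partial>M) = (\<integral>\<^sup>+x. indicator A x * N x \<partial>M)"
    using finite by (intro nn_integral_cong) (auto simp: indicator_def less_top)
  finally show ?thesis .
qed

lemma integral_eq_nn_integral_if:
  fixes h g :: "'a \<Rightarrow> real"
  assumes "AE x in M. h x = (if P x then g x else 0)" and "\<And>x. P x \<Longrightarrow> 0 \<le> g x"
    and [measurable]: "h \<in> borel_measurable M" "g \<in> borel_measurable M" "Measurable.pred M P"
  shows "(\<integral>x. h x \<partial>M) = enn2real (\<integral>\<^sup>+x. (if P x then ennreal (g x) else 0) \<partial>M)"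
proof -
  have "(\<integral>x. h x \<partial>M) = (\<integral>x. (if P x then g x else 0) \<partial>M)"
    using assms(1) by (intro integral_cong_AE) auto
  also have "\<dots> = enn2real (\<integral>\<^sup>+x. (if P x then ennreal (g x) else 0) \<partial>M)"
    using assms(2) by (subst integral_eq_nn_integral) (auto intro!: arg_cong[where f = enn2real] nn_integral_cong)
  finally show ?thesis .
qed

lemma integral_level_two:
  fixes f :: "(nat \<Rightarrow> real) \<Rightarrow> real \<Rightarrow> real"
  assumes n: "2 \<le> n" and t: "0 \<le> t"
    and f_meas [measurable]: "(\<lambda>(\<omega>, x). f \<omega> x) \<in> borel_measurable (kingman_space n \<Otimes>\<^sub>M borel)"
    and f_indep: "\<And>\<omega> y. f (\<omega> (2 := y)) = f \<omega>"
    and f_bounded: "\<And>\<omega> x. nonneg_times n \<omega> \<Longrightarrow> 0 \<le> x \<Longrightarrow> exit_time n 3 \<omega> + x \<le> t \<Longrightarrow>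
      0 \<le> f \<omega> x \<and> f \<omega> x \<le> B"
  shows "(LINT w:{0..t}|lborel.
            (\<integral>\<omega>. indicator {\<omega>. lineages n \<omega> w = 2} \<omega> * f \<omega> (w - exit_time n 3 \<omega>) \<partial>kingman_space n))
       = (\<integral>\<omega>. indicator {\<omega>. lineages n \<omega> t = 1} \<omega> * f \<omega> (\<omega> 2) \<partial>kingman_space n)"
proof -
  let ?K = "kingman_space n" and ?R = "exit_time n 3"
  interpret prob_space ?K
    by (rule prob_space_kingman_space)
  define W where "W w \<omega> \<longleftrightarrow> nonneg_times n \<omega> \<and> ?R \<omega> \<le> w \<and> w < ?R \<omega> + \<omega> 2" for w \<omega>
  define N where "N w = (\<integral>\<^sup>+\<omega>. (if W w \<omega> then ennreal (f \<omega> (w - ?R \<omega>)) else 0) \<partial>?K)" for w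
  have N_meas [measurable]: "N \<in> borel_measurable borel"
    unfolding N_def W_def by measurable
  have W_bounded: "0 \<le> f \<omega> (w - ?R \<omega>) \<and> f \<omega> (w - ?R \<omega>) \<le> B" if "W w \<omega>" "w \<le> t" for w \<omega>
    using that f_bounded[of \<omega> "w - ?R \<omega>"] by (simp add: W_def)
  have inner: "(\<integral>\<omega>. indicator {\<omega>. lineages n \<omega> w = 2} \<omega> * f \<omega> (w - ?R \<omega>) \<partial>?K) = enn2real (N w)"
    if w: "w \<in> {0..t}" for w
    unfolding N_def
  proof (rule integral_eq_nn_integral_if)
    show "AE \<omega> in ?K. indicator {\<omega>. lineages n \<omega> w = 2} \<omega> * f \<omega> (w - ?R \<omega>)
        = (if W w \<omega> then f \<omega> (w - ?R \<omega>) else 0)"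
      using AE_nonneg_times by eventually_elim (use w n in \<open>simp add: W_def lineages_eq_2_iff\<close>)
  qed (use w W_bounded in \<open>auto simp: W_def\<close>)
  have outer: "(\<integral>\<omega>. indicator {\<omega>. lineages n \<omega> t = 1} \<omega> * f \<omega> (\<omega> 2) \<partial>?K)
      = enn2real (\<integral>\<^sup>+\<omega>. (if nonneg_times n \<omega> \<and> ?R \<omega> + \<omega> 2 \<le> t then ennreal (f \<omega> (\<omega> 2)) else 0) \<partial>?K)"
  proof (rule integral_eq_nn_integral_if)
    show "AE \<omega> in ?K. indicator {\<omega>. lineages n \<omega> t = 1} \<omega> * f \<omega> (\<omega> 2)
        = (if nonneg_times n \<omega> \<and> ?R \<omega> + \<omega> 2 \<le> t then f \<omega> (\<omega> 2) else 0)"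
      using AE_nonneg_times by eventually_elim (use t n lineages_eq_1_iff in \<open>auto simp: indicator_def\<close>)
  qed (use f_bounded n in \<open>auto simp: nonneg_times_def\<close>)
  have N_finite: "N w < \<infinity>" if "w \<in> {0..t}" for w
  proof -
    have "N w \<le> (\<integral>\<^sup>+\<omega>. ennreal B \<partial>?K)"
      unfolding N_def using that W_bounded by (intro nn_integral_mono) (auto intro: ennreal_leI)
    also have "\<dots> < \<infinity>"
      by (simp add: emeasure_space_1)
    finally show ?thesis .
  qed
  have cmult: "indicator {0..t} w * N w
      = (\<integral>\<^sup>+\<omega>. indicator {0..t} w * (if W w \<omega> then ennreal (f \<omega> (w - ?R \<omega>)) else 0) \<partial>?K)" for w
    unfolding N_def by (rule nn_integral_cmult[symmetric]) (simp add: W_def)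
  have "(LINT w:{0..t}|lborel. (\<integral>\<omega>. indicator {\<omega>. lineages n \<omega> w = 2} \<omega> * f \<omega> (w - ?R \<omega>) \<partial>?K))
      = (LINT w:{0..t}|lborel. enn2real (N w))"
    by (intro set_lebesgue_integral_cong) (auto simp: inner)
  also have "\<dots> = enn2real (\<integral>\<^sup>+w. indicator {0..t} w * N w \<partial>lborel)"
    using N_finite by (intro set_integral_enn2real_eq_nn_integral) auto
  also have "\<dots> = enn2real (\<integral>\<^sup>+\<omega>. (if nonneg_times n \<omega> \<and> ?R \<omega> + \<omega> 2 \<le> t then ennreal (f \<omega> (\<omega> 2)) else 0) \<partial>?K)"
    unfolding cmult W_def using nn_integral_level_two[of n "\<lambda>\<omega> x. ennreal (f \<omega> x)" t] n
    by (simp add: f_indep)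
  also have "\<dots> = (\<integral>\<omega>. indicator {\<omega>. lineages n \<omega> t = 1} \<omega> * f \<omega> (\<omega> 2) \<partial>?K)"
    by (rule outer[symmetric])
  finally show ?thesis .
qed

lemma q_eq_integral: "q n l t = (\<integral>\<omega>. indicator {\<omega>. lineages n \<omega> t = l} \<omega> \<partial>kingman_space n)"
  by (simp add: q_def Int_def conj_commute)

lemma integral_q_two:
  assumes "2 \<le> n" "0 \<le> t"
  shows "(LINT w:{0..t}|lborel. q n 2 w) = q n 1 t"
  using integral_level_two[of n t "\<lambda>_ _. 1" 1] assms by (simp add: q_eq_integral)

lemma q_occ_eq_integral:
  assumes "\<And>\<omega>. nonneg_times n \<omega> \<Longrightarrow> occ_time n k t \<omega> * indicator {\<omega>. lineages n \<omega> t = l} \<omega> = h \<omega>"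
    and "h \<in> borel_measurable (kingman_space n)"
  shows "q_occ n l k t = (\<integral>\<omega>. h \<omega> \<partial>kingman_space n)"
  unfolding q_occ_def
proof (rule integral_cong_AE)
  show "AE \<omega> in kingman_space n. occ_time n k t \<omega> * indicator {\<omega>. lineages n \<omega> t = l} \<omega> = h \<omega>"
    using AE_nonneg_times by eventually_elim (rule assms(1))
qed (simp_all add: assms(2))

lemma integral_q_occ_two:
  assumes n: "2 \<le> n" and t: "0 \<le> t" and k: "2 \<le> k" "k \<le> n"
  shows "(LINT w:{0..t}|lborel. q_occ n 2 k w) = q_occ n 1 k t"
proof -
  let ?K = "kingman_space n" and ?R = "exit_time n 3"
  define f where "f \<omega> x = (if k = 2 then x else \<omega> k)" for \<omega> :: "nat \<Rightarrow> real" and x :: real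
  have f_meas: "(\<lambda>(\<omega>, x). f \<omega> x) \<in> borel_measurable (?K \<Otimes>\<^sub>M borel)"
    unfolding f_def by measurable
  have f_indep: "f (\<omega> (2 := y)) = f \<omega>" for \<omega> y
    by (rule ext) (simp add: f_def)
  have f_bounded: "0 \<le> f \<omega> x \<and> f \<omega> x \<le> t"
    if "nonneg_times n \<omega>" "0 \<le> x" "?R \<omega> + x \<le> t" for \<omega> x
    using that k exit_time_nonneg[of n \<omega> 3] holding_time_le_exit_time[of n \<omega> 3 k]
    by (auto simp: f_def nonneg_times_def)
  have level_two: "occ_time n k w \<omega> * indicator {\<omega>. lineages n \<omega> w = 2} \<omega>
      = indicator {\<omega>. lineages n \<omega> w = 2} \<omega> * f \<omega> (w - ?R \<omega>)"
    if \<omega>: "nonneg_times n \<omega>" and w: "0 \<le> w" for \<omega> w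
  proof (cases "lineages n \<omega> w = 2")
    case True
    then have "?R \<omega> \<le> w"
      using lineages_eq_2_iff[OF \<omega> w n] by simp
    then show ?thesis
      using True \<omega> w k occ_time_current_level[OF \<omega> w, of 2] exit_time_antimono[OF \<omega>, of 3 k]
        occ_time_completed_level[OF \<omega> k, of w]
      by (auto simp: f_def)
  qed simp
  have level_one: "occ_time n k t \<omega> * indicator {\<omega>. lineages n \<omega> t = 1} \<omega>
      = indicator {\<omega>. lineages n \<omega> t = 1} \<omega> * f \<omega> (\<omega> 2)"
    if \<omega>: "nonneg_times n \<omega>" for \<omega>
  proof (cases "lineages n \<omega> t = 1")
    case True
    then have "exit_time n k \<omega> \<le> t"
      using lineages_eq_1_iff[OF \<omega> t n] exit_time_antimono[OF \<omega>, of 2 k] exit_time_two[OF n] k by simp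
    then show ?thesis
      using True occ_time_completed_level[OF \<omega> k] by (simp add: f_def)
  qed simp
  have "(LINT w:{0..t}|lborel. q_occ n 2 k w)
      = (LINT w:{0..t}|lborel. (\<integral>\<omega>. indicator {\<omega>. lineages n \<omega> w = 2} \<omega> * f \<omega> (w - ?R \<omega>) \<partial>?K))"
  proof (intro set_lebesgue_integral_cong allI impI)
    fix w :: real assume "w \<in> {0..t}"
    then show "q_occ n 2 k w = (\<integral>\<omega>. indicator {\<omega>. lineages n \<omega> w = 2} \<omega> * f \<omega> (w - ?R \<omega>) \<partial>?K)"
      using level_two by (intro q_occ_eq_integral) (auto simp: f_def)
  qed simp
  also have "\<dots> = (\<integral>\<omega>. indicator {\<omega>. lineages n \<omega> t = 1} \<omega> * f \<omega> (\<omega> 2) \<partial>?K)"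
    using n t f_meas f_indep f_bounded by (rule integral_level_two)
  also have "\<dots> = q_occ n 1 k t"
    by (rule q_occ_eq_integral[symmetric]) (use level_one in \<open>auto simp: f_def\<close>)
  finally show ?thesis .
qed

lemma integral_weighted_q_two:
  assumes n: "2 \<le> n" and t: "0 \<le> t"
  shows "(LINT w:{0..t}|lborel. (t - w) * q n 2 w) = q_occ n 1 1 t"
proof -
  let ?K = "kingman_space n" and ?R = "exit_time n 3"
  define f where "f \<omega> x = t - ?R \<omega> - x" for \<omega> x
  have f_meas: "(\<lambda>(\<omega>, x). f \<omega> x) \<in> borel_measurable (?K \<Otimes>\<^sub>M borel)"
    unfolding f_def by measurable
  have f_indep: "f (\<omega> (2 := y)) = f \<omega>" for \<omega> y
    by (rule ext) (simp add: f_def exit_time_fun_upd)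
  have f_bounded: "0 \<le> f \<omega> x \<and> f \<omega> x \<le> t"
    if "nonneg_times n \<omega>" "0 \<le> x" "?R \<omega> + x \<le> t" for \<omega> x
    using that exit_time_nonneg[of n \<omega> 3] by (simp add: f_def)
  have level_one: "occ_time n 1 t \<omega> * indicator {\<omega>. lineages n \<omega> t = 1} \<omega>
      = indicator {\<omega>. lineages n \<omega> t = 1} \<omega> * f \<omega> (\<omega> 2)"
    if \<omega>: "nonneg_times n \<omega>" for \<omega>
  proof (cases "lineages n \<omega> t = 1")
    case True
    then show ?thesis
      using occ_time_current_level[OF \<omega> t _ True, unfolded one_add_one] n by (simp add: f_def exit_time_two)
  qed simp
  have "(LINT w:{0..t}|lborel. (t - w) * q n 2 w)
      = (LINT w:{0..t}|lborel. (\<integral>\<omega>. indicator {\<omega>. lineages n \<omega> w = 2} \<omega> * f \<omega> (w - ?R \<omega>) \<partial>?K))"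
    by (simp add: q_eq_integral f_def mult.commute)
  also have "\<dots> = (\<integral>\<omega>. indicator {\<omega>. lineages n \<omega> t = 1} \<omega> * f \<omega> (\<omega> 2) \<partial>?K)"
    using n t f_meas f_indep f_bounded by (rule integral_level_two)
  also have "\<dots> = q_occ n 1 1 t"
    by (rule q_occ_eq_integral[symmetric]) (use level_one in \<open>auto simp: f_def\<close>)
  finally show ?thesis .
qed

theorem lemma2:
  fixes n k :: nat and t :: real
  assumes "n \<ge> 2" and "t \<ge> 0" and "2 \<le> k" and "k \<le> n"
  shows "(LINT w:{0..t}|lborel. q n 2 w) = q n 1 t
    \<and> (LINT w:{0..t}|lborel. q_occ n 2 k w) = q_occ n 1 k t
    \<and> (LINT w:{0..t}|lborel. (t - w) * q n 2 w) = q_occ n 1 1 t"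
  using integral_q_two[OF assms(1,2)] integral_q_occ_two[OF assms] integral_weighted_q_two[OF assms(1,2)]
  by blast

end
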